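(* Let $n\ge1$, let $\mathcal{Z}=\{z_1,\dots,z_m\}\subset\mathbb{D}^n$ be $m$ distinct points, $\mathcal{Q}_{\mathcal{Z}}=\operatorname{span}\{\mathbb{S}(\cdot,z_j):j=1,\dots,m\}$, and $X\in\mathcal{B}(\mathcal{Q}_{\mathcal{Z}})$. Then $XS_{z_i}=S_{z_i}X$ for all $i=1,\dots,n$ if and only if there exists $\varphi\in H^\infty(\mathbb{D}^n)$ with $X=S_\varphi$. Moreover, in this case one may take $\varphi=X(P_{\mathcal{Q}_{\mathcal{Z}}}1)$, and this function lies in $H^\infty(\mathbb{D}^n)\cap\mathcal{Q}_{\mathcal{Z}}$.
   Context: $\mathbb{S}(z,w)=\prod_{i=1}^n(1-z_i\bar w_i)^{-1}$ is the Szegő kernel and $\mathbb{S}(\cdot,w)(z)=\mathbb{S}(z,w)$, an element of the Hardy space $H^2(\mathbb{T}^n)$. For $\varphi\in H^\infty(\mathbb{D}^n)$, $T_\varphi f=\varphi f$ on $H^2(\mathbb{T}^n)$, $P_{\mathcal{Q}_{\mathcal{Z}}}$ is the orthogonal projection onto $\mathcal{Q}_{\mathcal{Z}}$, and $S_\varphi=P_{\mathcal{Q}_{\mathcal{Z}}}T_\varphi|_{\mathcal{Q}_{\mathcal{Z}}}$ (in particular $S_{z_i}$ for $\varphi=z_i$). *)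

theory Defs
  imports "HOL-Analysis.Analysis"
begin

text \<open>Points of the polydisc D^n are vectors of type complex^'n ('n finite, n = CARD('n)).
  Elements of H^2 are represented by their holomorphic functions on D^n (values outside
  the polydisc are irrelevant for the Hilbert-space structure).\<close>

definition polydisc :: "(complex ^ 'n::finite) set" where
  "polydisc = {z. \<forall>i. norm (z $ i) < 1}"

definition mono_pow :: "complex ^ 'n::finite \<Rightarrow> ('n \<Rightarrow> nat) \<Rightarrow> complex" where
  "mono_pow z \<alpha> = (\<Prod>i\<in>UNIV. (z $ i) ^ (\<alpha> i))"

definition power_series_on :: "(complex ^ 'n::finite \<Rightarrow> complex) \<Rightarrow> (('n \<Rightarrow> nat) \<Rightarrow> complex) \<Rightarrow> bool" where
  "power_series_on f c \<longleftrightarrow> (\<forall>z\<in>polydisc. ((\<lambda>\<alpha>. c \<alpha> * mono_pow z \<alpha>) has_sum f z) UNIV)"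

definition holo_polydisc :: "(complex ^ 'n::finite \<Rightarrow> complex) \<Rightarrow> bool" where
  "holo_polydisc f \<longleftrightarrow> (\<exists>c. power_series_on f c)"

definition hardy2 :: "(complex ^ 'n::finite \<Rightarrow> complex) set" where
  "hardy2 = {f. \<exists>c. power_series_on f c \<and> (\<lambda>\<alpha>. (norm (c \<alpha>))\<^sup>2) summable_on UNIV}"

definition hinf :: "(complex ^ 'n::finite \<Rightarrow> complex) set" where
  "hinf = {f. holo_polydisc f \<and> bounded (f ` polydisc)}"

definition h2_coeff :: "(complex ^ 'n::finite \<Rightarrow> complex) \<Rightarrow> ('n \<Rightarrow> nat) \<Rightarrow> complex" where
  "h2_coeff f = (THE c. power_series_on f c)"

definition h2_inner :: "(complex ^ 'n::finite \<Rightarrow> complex) \<Rightarrow> (complex ^ 'n \<Rightarrow> complex) \<Rightarrow> complex" where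
  "h2_inner f g = (\<Sum>\<^sub>\<infinity>\<alpha>. h2_coeff f \<alpha> * cnj (h2_coeff g \<alpha>))"

definition h2_norm :: "(complex ^ 'n::finite \<Rightarrow> complex) \<Rightarrow> real" where
  "h2_norm f = sqrt (Re (h2_inner f f))"

text \<open>Szego kernel S(z,w) = prod_i (1 - z_i conj(w_i))^{-1}; szego w is S(.,w).\<close>
definition szego :: "complex ^ 'n::finite \<Rightarrow> complex ^ 'n \<Rightarrow> complex" where
  "szego w z = (\<Prod>i\<in>UNIV. inverse (1 - z $ i * cnj (w $ i)))"

definition QZ :: "(complex ^ 'n::finite) set \<Rightarrow> (complex ^ 'n \<Rightarrow> complex) set" where
  "QZ Z = {f. \<exists>c. f = (\<lambda>z. \<Sum>w\<in>Z. c w * szego w z)}"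

definition projQ :: "(complex ^ 'n::finite) set \<Rightarrow> (complex ^ 'n \<Rightarrow> complex) \<Rightarrow> (complex ^ 'n \<Rightarrow> complex)" where
  "projQ Z f = (THE g. g \<in> QZ Z \<and> (\<forall>q\<in>QZ Z. h2_inner (\<lambda>z. f z - g z) q = 0))"

text \<open>S_phi = P_Q T_phi restricted to Q_Z.\<close>
definition compr :: "(complex ^ 'n::finite) set \<Rightarrow> (complex ^ 'n \<Rightarrow> complex) \<Rightarrow> (complex ^ 'n \<Rightarrow> complex) \<Rightarrow> (complex ^ 'n \<Rightarrow> complex)" where
  "compr Z \<phi> f = projQ Z (\<lambda>z. \<phi> z * f z)"

definition bounded_op_on :: "(complex ^ 'n::finite \<Rightarrow> complex) set \<Rightarrow> ((complex ^ 'n \<Rightarrow> complex) \<Rightarrow> (complex ^ 'n \<Rightarrow> complex)) \<Rightarrow> bool" where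
  "bounded_op_on Q X \<longleftrightarrow>
     (\<forall>f\<in>Q. X f \<in> Q) \<and>
     (\<forall>f\<in>Q. \<forall>g\<in>Q. X (\<lambda>z. f z + g z) = (\<lambda>z. X f z + X g z)) \<and>
     (\<forall>f\<in>Q. \<forall>a::complex. X (\<lambda>z. a * f z) = (\<lambda>z. a * X f z)) \<and>
     (\<exists>C. \<forall>f\<in>Q. h2_norm (X f) \<le> C * h2_norm f)"

end

theory Submission
  imports Defs "HOL-Complex_Analysis.Cauchy_Integral_Formula"
begin

text \<open>An element of Q_Z is determined by its values on Z, because the Gram matrix of the
  kernels is positive definite, and every function on Z is attained. Hence P_Q f is the element
  of Q_Z interpolating f on Z, and S_phi f interpolates phi f: in the Lagrange basis E_w of Q_Z,
  S_phi is diagonal with eigenvalues phi(w). In particular S_phi commutes with every S_{z_i}.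
  Conversely, the joint eigenspaces of the S_{z_i} are the lines through the E_w, since the
  coordinates separate the points of Z; an operator X commuting with all S_{z_i} preserves them,
  so it is diagonal as well, and X = S_phi for phi = X (P_Q 1), whose value at w is the
  eigenvalue of X on E_w.\<close>

section \<open>Unconditional sums\<close>

lemma has_sum_diff:
  fixes f g :: "'a \<Rightarrow> 'b::topological_ab_group_add"
  assumes "(f has_sum a) A" and "(g has_sum b) A"
  shows "((\<lambda>x. f x - g x) has_sum (a - b)) A"
  using assms unfolding has_sum_def sum_subtractf by (rule tendsto_diff)

lemma has_sum_sum:
  fixes f :: "'i \<Rightarrow> 'a \<Rightarrow> 'b::topological_comm_monoid_add"
  assumes "\<And>i. i \<in> I \<Longrightarrow> (f i has_sum s i) A"
  shows "((\<lambda>x. \<Sum>i\<in>I. f i x) has_sum (\<Sum>i\<in>I. s i)) A"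
proof -
  have swap: "sum (\<lambda>x. \<Sum>i\<in>I. f i x) = (\<lambda>F. \<Sum>i\<in>I. sum (f i) F)"
    by (rule ext) (rule sum.swap)
  show ?thesis
    using assms unfolding has_sum_def swap by (rule tendsto_sum)
qed

lemma has_sum_product_complex:
  fixes f :: "'a \<Rightarrow> complex" and g :: "'b \<Rightarrow> complex"
  assumes f: "(f has_sum a) A" and g: "(g has_sum b) B"
  shows "((\<lambda>(x, y). f x * g y) has_sum (a * b)) (A \<times> B)"
proof (rule has_sum_SigmaI)
  have f_abs: "(\<lambda>x. norm (f x)) summable_on A" and g_abs: "(\<lambda>y. norm (g y)) summable_on B"
    using f g summable_on_iff_abs_summable_on_complex has_sum_imp_summable by blast+
  have "(\<lambda>x. norm (f x) * infsum (\<lambda>y. norm (g y)) B) summable_on A"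
    using summable_on_cmult_left[OF f_abs] .
  then have "(\<lambda>p. norm ((\<lambda>(x, y). f x * g y) p)) summable_on A \<times> B"
    using summable_on_cmult_right[OF g_abs]
    by (subst Infinite_Sum.abs_summable_on_Sigma_iff)
       (auto simp: norm_mult infsum_cmult_right' infsum_nonneg abs_mult)
  then show "(\<lambda>(x, y). f x * g y) summable_on A \<times> B"
    using abs_summable_summable by blast
qed (auto intro: has_sum_cmult_right has_sum_cmult_left f g)

lemma has_sum_prod_PiE_complex:
  fixes f :: "'i \<Rightarrow> 'b \<Rightarrow> complex"
  assumes "finite I" and "\<And>i. i \<in> I \<Longrightarrow> (f i has_sum s i) UNIV"
  shows "((\<lambda>g. \<Prod>i\<in>I. f i (g i)) has_sum (\<Prod>i\<in>I. s i)) (PiE I (\<lambda>_. UNIV))"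
  using assms
proof (induction I rule: finite_induct)
  case empty
  then show ?case by (auto intro!: has_sum_finiteI)
next
  case (insert j I)
  have "((\<lambda>(g, y). (\<Prod>i\<in>I. f i (g i)) * f j y) has_sum ((\<Prod>i\<in>I. s i) * s j))
          (PiE I (\<lambda>_. UNIV) \<times> UNIV)"
    using insert by (intro has_sum_product_complex) auto
  also have "?this \<longleftrightarrow> ?case"
  proof (rule has_sum_reindex_bij_witness[where j="\<lambda>(g, y). g(j := y)"
                                             and i="\<lambda>g. (g(j := undefined), g j)"])
    fix a assume "a \<in> PiE I (\<lambda>_. UNIV :: 'b set) \<times> (UNIV :: 'b set)"
    then obtain g y where a: "a = (g, y)" and g: "g \<in> PiE I (\<lambda>_. UNIV :: 'b set)"
      by auto
    have "g j = undefined"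
      using g insert.hyps(2) by (auto simp: PiE_def extensional_def)
    then show "(case (case a of (g, y) \<Rightarrow> g(j := y)) of g \<Rightarrow> (g(j := undefined), g j)) = a"
      using a by auto
    show "(case a of (g, y) \<Rightarrow> g(j := y)) \<in> PiE (insert j I) (\<lambda>_. UNIV)"
      using a g by (auto simp: PiE_def extensional_def)
    have "(\<Prod>i\<in>I. f i ((g(j := y)) i)) = (\<Prod>i\<in>I. f i (g i))"
      by (rule prod.cong) (use insert.hyps(2) in auto)
    then show "(\<Prod>i\<in>insert j I. f i ((case a of (g, y) \<Rightarrow> g(j := y)) i)) =
      (case a of (g, y) \<Rightarrow> (\<Prod>i\<in>I. f i (g i)) * f j y)"
      using a insert.hyps by (simp add: mult.commute)
  next
    fix g assume "g \<in> PiE (insert j I) (\<lambda>_. UNIV :: 'b set)"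
    then show "(g(j := undefined), g j) \<in> PiE I (\<lambda>_. UNIV) \<times> UNIV"
      using insert.hyps(2) by (auto simp: PiE_def extensional_def)
  qed (use insert.hyps in \<open>auto simp: mult.commute\<close>)
  finally show ?case .
qed

lemma has_sum_geometric_complex:
  fixes x :: complex
  assumes "norm x < 1"
  shows "((\<lambda>n. x ^ n) has_sum inverse (1 - x)) UNIV"
proof (rule norm_summable_imp_has_sum)
  show "summable (\<lambda>n. norm (x ^ n))"
    using assms by (simp add: norm_power summable_geometric)
  show "(\<lambda>n. x ^ n) sums inverse (1 - x)"
    using geometric_sums[OF assms] by (simp add: field_simps)
qed

lemma powser_coeff_eq_0_if_sums_0:
  fixes b :: "nat \<Rightarrow> complex"
  assumes "\<And>x. norm x < 1 \<Longrightarrow> (\<lambda>n. b n * x ^ n) sums 0"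
  shows "b m = 0"
proof (rule ccontr)
  assume nz: "b m \<noteq> 0"
  have "b 0 = 0"
    using assms[of 0] by simp
  with nz have "m > 0"
    by (cases m) auto
  obtain s where "0 < s" and "\<And>z::complex. z \<in> cball 0 s - {0} \<Longrightarrow> 0 \<noteq> 0"
    by (rule powser_0_nonzero[of 1 0 b "\<lambda>_. 0", OF _ _ _ nz \<open>m > 0\<close>]) (use assms in auto)
  moreover have "complex_of_real s \<in> cball 0 s - {0}"
    using \<open>0 < s\<close> by simp
  ultimately show False
    by blast
qed

section \<open>Power series on the polydisc\<close>

lemma zero_in_polydisc [simp]: "0 \<in> polydisc"
  by (simp add: polydisc_def)

lemma coord_update_in_polydisc:
  "z \<in> polydisc \<Longrightarrow> norm t < 1 \<Longrightarrow> (\<chi> i. if i = j then t else z $ i) \<in> polydisc"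
  by (auto simp: polydisc_def)

lemma mono_pow_zero [simp]: "mono_pow z (\<lambda>_. 0) = 1"
  by (simp add: mono_pow_def)

lemma mono_pow_add: "mono_pow z (\<lambda>i. \<alpha> i + \<beta> i) = mono_pow z \<alpha> * mono_pow z \<beta>"
  by (simp add: mono_pow_def prod.distrib[symmetric] power_add)

lemma mono_pow_mult: "mono_pow a \<alpha> * mono_pow b \<alpha> = mono_pow (\<chi> i. a $ i * b $ i) \<alpha>"
  by (simp add: mono_pow_def prod.distrib[symmetric] power_mult_distrib)

lemma cnj_mono_pow: "cnj (mono_pow w \<alpha>) = mono_pow (\<chi> i. cnj (w $ i)) \<alpha>"
  by (simp add: mono_pow_def)

lemma mono_pow_unit: "mono_pow z (\<lambda>j. if j = i then 1 else 0) = z $ i"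
proof -
  have "mono_pow z (\<lambda>j. if j = i then 1 else 0) = (\<Prod>j\<in>UNIV. if j = i then z $ j else 1)"
    unfolding mono_pow_def by (rule prod.cong) auto
  then show ?thesis by simp
qed

lemma mono_pow_Suc: "mono_pow z (\<alpha>(i := Suc (\<alpha> i))) = z $ i * mono_pow z \<alpha>"
proof -
  have "\<alpha>(i := Suc (\<alpha> i)) = (\<lambda>j. \<alpha> j + (if j = i then 1 else 0))"
    by auto
  then show ?thesis
    by (simp add: mono_pow_add mono_pow_unit)
qed

lemma mono_pow_coord_update:
  "mono_pow (\<chi> i. if i = j then t else z $ i) \<alpha> = t ^ \<alpha> j * mono_pow z (\<alpha>(j := 0))"
proof -
  have "mono_pow (\<chi> i. if i = j then t else z $ i) \<alpha> = t ^ \<alpha> j * (\<Prod>i\<in>UNIV - {j}. z $ i ^ \<alpha> i)"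
    unfolding mono_pow_def by (subst prod.remove[of _ j]) (auto intro!: prod.cong)
  moreover have "mono_pow z (\<alpha>(j := 0)) = (\<Prod>i\<in>UNIV - {j}. z $ i ^ \<alpha> i)"
    unfolding mono_pow_def by (subst prod.remove[of _ j]) (auto intro!: prod.cong)
  ultimately show ?thesis
    by simp
qed

lemma has_sum_mono_pow:
  assumes "\<And>i. norm (x $ i) < 1"
  shows "(mono_pow x has_sum (\<Prod>i\<in>UNIV. inverse (1 - x $ i))) UNIV"
proof -
  have "((\<lambda>g. \<Prod>i\<in>UNIV. (x $ i) ^ g i) has_sum (\<Prod>i\<in>UNIV. inverse (1 - x $ i)))
          (PiE UNIV (\<lambda>_. UNIV))"
    by (rule has_sum_prod_PiE_complex) (auto intro: has_sum_geometric_complex assms)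
  then show ?thesis
    by (simp add: mono_pow_def[abs_def])
qed

lemma finite_multiindex_splittings:
  fixes \<gamma> :: "'n::finite \<Rightarrow> nat"
  shows "finite {p :: ('n \<Rightarrow> nat) \<times> ('n \<Rightarrow> nat). (\<lambda>i. fst p i + snd p i) = \<gamma>}"
proof -
  define B where "B = {\<alpha>::'n \<Rightarrow> nat. \<forall>i. \<alpha> i \<le> \<gamma> i}"
  have "B \<subseteq> PiE UNIV (\<lambda>i. {..\<gamma> i})"
    by (auto simp: B_def PiE_def Pi_def)
  then have "finite B"
    by (rule finite_subset) (auto intro: finite_PiE)
  moreover have "{p :: ('n \<Rightarrow> nat) \<times> ('n \<Rightarrow> nat). (\<lambda>i. fst p i + snd p i) = \<gamma>} \<subseteq> B \<times> B"
    by (auto simp: B_def)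
  ultimately show ?thesis
    by (meson finite_SigmaI finite_subset)
qed

lemma power_series_on_const:
  "power_series_on (\<lambda>_. a) (\<lambda>\<alpha>. if \<alpha> = (\<lambda>_. 0) then a else 0)"
  unfolding power_series_on_def
  by (intro ballI has_sum_finite_neutralI[where B="{\<lambda>_. 0}"]) auto

lemma power_series_on_coord:
  "power_series_on (\<lambda>z. z $ i) (\<lambda>\<alpha>. if \<alpha> = (\<lambda>j. if j = i then 1 else 0) then 1 else 0)"
  unfolding power_series_on_def
  by (intro ballI has_sum_finite_neutralI[where B="{\<lambda>j. if j = i then 1 else 0}"])
     (auto simp: mono_pow_unit)

lemma power_series_on_cmult:
  "power_series_on f c \<Longrightarrow> power_series_on (\<lambda>z. a * f z) (\<lambda>\<alpha>. a * c \<alpha>)"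
  unfolding power_series_on_def by (auto simp: mult.assoc intro: has_sum_cmult_right)

lemma power_series_on_diff:
  "power_series_on f c \<Longrightarrow> power_series_on g d \<Longrightarrow>
     power_series_on (\<lambda>z. f z - g z) (\<lambda>\<alpha>. c \<alpha> - d \<alpha>)"
  unfolding power_series_on_def by (auto simp: left_diff_distrib intro: has_sum_diff)

lemma power_series_on_sum:
  "(\<And>i. i \<in> I \<Longrightarrow> power_series_on (f i) (c i)) \<Longrightarrow>
     power_series_on (\<lambda>z. \<Sum>i\<in>I. f i z) (\<lambda>\<alpha>. \<Sum>i\<in>I. c i \<alpha>)"
  unfolding power_series_on_def by (auto simp: sum_distrib_right intro: has_sum_sum)

lemma power_series_on_mult:
  fixes f g :: "complex ^ 'n::finite \<Rightarrow> complex"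
  assumes f: "power_series_on f c" and g: "power_series_on g d"
  shows "power_series_on (\<lambda>z. f z * g z)
           (\<lambda>\<gamma>. \<Sum>p\<in>{p. (\<lambda>i. fst p i + snd p i) = \<gamma>}. c (fst p) * d (snd p))"
  unfolding power_series_on_def
proof
  fix z :: "complex ^ 'n" assume z: "z \<in> polydisc"
  define fib where "fib \<gamma> = {p. (\<lambda>i. fst p i + snd p i) = \<gamma>}" for \<gamma> :: "'n \<Rightarrow> nat"
  define summand where "summand p = (c (fst p) * mono_pow z (fst p)) * (d (snd p) * mono_pow z (snd p))"
    for p :: "('n \<Rightarrow> nat) \<times> ('n \<Rightarrow> nat)"
  have "((\<lambda>(\<alpha>, \<beta>). (c \<alpha> * mono_pow z \<alpha>) * (d \<beta> * mono_pow z \<beta>)) has_sum (f z * g z)) (UNIV \<times> UNIV)"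
    by (rule has_sum_product_complex) (use f g z in \<open>auto simp: power_series_on_def\<close>)
  also have "?this \<longleftrightarrow> ((\<lambda>(\<gamma>, p). summand p) has_sum (f z * g z)) (Sigma UNIV fib)"
    by (rule has_sum_reindex_bij_witness[where j="\<lambda>p. ((\<lambda>i. fst p i + snd p i), p)" and i=snd])
       (auto simp: fib_def summand_def)
  finally have sum_Sigma: "((\<lambda>(\<gamma>, p). summand p) has_sum (f z * g z)) (Sigma UNIV fib)" .
  have sum_fib: "(summand has_sum ((\<Sum>p\<in>fib \<gamma>. c (fst p) * d (snd p)) * mono_pow z \<gamma>)) (fib \<gamma>)"
    for \<gamma>
  proof (rule has_sum_finiteI)
    show "finite (fib \<gamma>)"
      unfolding fib_def by (rule finite_multiindex_splittings)
    show "(\<Sum>p\<in>fib \<gamma>. c (fst p) * d (snd p)) * mono_pow z \<gamma> = sum summand (fib \<gamma>)"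
      unfolding sum_distrib_right
      by (rule sum.cong) (auto simp: fib_def summand_def mono_pow_add algebra_simps)
  qed
  have "((\<lambda>\<gamma>. (\<Sum>p\<in>fib \<gamma>. c (fst p) * d (snd p)) * mono_pow z \<gamma>) has_sum (f z * g z)) UNIV"
    by (rule has_sum_Sigma'[OF sum_Sigma]) (simp add: sum_fib)
  then show "((\<lambda>\<gamma>. (\<Sum>p\<in>{p. (\<lambda>i. fst p i + snd p i) = \<gamma>}. c (fst p) * d (snd p)) * mono_pow z \<gamma>)
               has_sum (f z * g z)) UNIV"
    by (simp add: fib_def)
qed

lemma power_series_on_szego:
  fixes w :: "complex ^ 'n::finite"
  assumes "w \<in> polydisc"
  shows "power_series_on (szego w) (\<lambda>\<alpha>. cnj (mono_pow w \<alpha>))"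
  unfolding power_series_on_def
proof
  fix z :: "complex ^ 'n" assume z: "z \<in> polydisc"
  have "norm (z $ i * cnj (w $ i)) < 1" for i
  proof -
    have "norm (z $ i) < 1" "norm (w $ i) < 1"
      using z assms by (auto simp: polydisc_def)
    then show ?thesis
      using mult_strict_mono'[of "norm (z $ i)" 1 "norm (w $ i)" 1] by (simp add: norm_mult)
  qed
  then have "(mono_pow (\<chi> i. z $ i * cnj (w $ i)) has_sum szego w z) UNIV"
    using has_sum_mono_pow[of "\<chi> i. z $ i * cnj (w $ i)"] by (simp add: szego_def)
  then show "((\<lambda>\<alpha>. cnj (mono_pow w \<alpha>) * mono_pow z \<alpha>) has_sum szego w z) UNIV"
    by (simp add: cnj_mono_pow mono_pow_mult mult.commute)
qed

lemma holo_polydisc_mult: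
  assumes "holo_polydisc f" and "holo_polydisc g"
  shows "holo_polydisc (\<lambda>z. f z * g z)"
proof -
  obtain c d where "power_series_on f c" and "power_series_on g d"
    using assms unfolding holo_polydisc_def by blast
  from power_series_on_mult[OF this] show ?thesis
    unfolding holo_polydisc_def by blast
qed

lemma holo_polydisc_coord: "holo_polydisc (\<lambda>z. z $ i)"
  using power_series_on_coord unfolding holo_polydisc_def by blast

lemma holo_polydisc_const: "holo_polydisc (\<lambda>_. a)"
  using power_series_on_const unfolding holo_polydisc_def by blast

text \<open>Freezing all coordinates but the j-th turns the series into a power series in z_j whose
  k-th coefficient is the slice; it vanishes on the disc, so the slice sums to 0.\<close>

lemma power_series_on_zero_slice:
  fixes c :: "('n::finite \<Rightarrow> nat) \<Rightarrow> complex"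
  assumes "power_series_on (\<lambda>_. 0) c"
  shows "power_series_on (\<lambda>_. 0) (\<lambda>\<alpha>. if \<alpha> j = 0 then c (\<alpha>(j := k)) else 0)"
  unfolding power_series_on_def
proof
  fix z :: "complex ^ 'n" assume z: "z \<in> polydisc"
  define D where "D = {\<alpha> :: 'n \<Rightarrow> nat. \<alpha> j = 0}"
  define F where "F k' \<alpha> = c (\<alpha>(j := k')) * mono_pow z \<alpha>" for k' \<alpha>
  have F_Sigma: "((\<lambda>(k', \<alpha>). t ^ k' * F k' \<alpha>) has_sum 0) (UNIV \<times> D)" if t: "norm t < 1" for t
  proof -
    have "((\<lambda>\<alpha>. c \<alpha> * mono_pow (\<chi> i. if i = j then t else z $ i) \<alpha>) has_sum 0) UNIV"
      using assms coord_update_in_polydisc[OF z t] unfolding power_series_on_def by blast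
    also have "?this \<longleftrightarrow> ?thesis"
      by (rule has_sum_reindex_bij_witness[where j="\<lambda>\<alpha>. (\<alpha> j, \<alpha>(j := 0))"
                                             and i="\<lambda>(k', \<alpha>). \<alpha>(j := k')"])
         (auto simp: D_def F_def mono_pow_coord_update)
    finally show ?thesis .
  qed
  have F_summable: "F k' summable_on D" for k'
  proof -
    have "(\<lambda>(k', \<alpha>). (1/2 :: complex) ^ k' * F k' \<alpha>) summable_on (UNIV \<times> D)"
      using F_Sigma[of "1/2"] has_sum_imp_summable by auto
    from summable_on_SigmaD1[OF this, of k']
    have "(\<lambda>\<alpha>. (1/2 :: complex) ^ k' * F k' \<alpha>) summable_on D"
      by simp
    from summable_on_cmult_right[OF this, of "2 ^ k'"] show ?thesis
      by (simp add: power_one_over)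
  qed
  define b where "b k' = infsum (F k') D" for k'
  have F_has_sum: "(F k' has_sum b k') D" for k'
    using F_summable b_def by auto
  have "(\<lambda>n. b n * t ^ n) sums 0" if "norm t < 1" for t
  proof -
    have "((\<lambda>k'. t ^ k' * b k') has_sum 0) UNIV"
      by (rule has_sum_Sigma'[OF F_Sigma[OF that]]) (simp add: has_sum_cmult_right F_has_sum)
    then show ?thesis
      using has_sum_imp_sums by (simp add: mult.commute)
  qed
  then have "b k = 0"
    by (rule powser_coeff_eq_0_if_sums_0)
  then have "(F k has_sum 0) D"
    using F_has_sum by metis
  also have "?this \<longleftrightarrow>
      ((\<lambda>\<alpha>. (if \<alpha> j = 0 then c (\<alpha>(j := k)) else 0) * mono_pow z \<alpha>) has_sum 0) UNIV"
    by (rule has_sum_cong_neutral) (auto simp: D_def F_def)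
  finally show "((\<lambda>\<alpha>. (if \<alpha> j = 0 then c (\<alpha>(j := k)) else 0) * mono_pow z \<alpha>) has_sum 0) UNIV" .
qed

lemma power_series_on_zero_coeffs:
  fixes c :: "('n::finite \<Rightarrow> nat) \<Rightarrow> complex"
  assumes "power_series_on (\<lambda>_. 0) c"
  shows "c \<alpha> = 0"
proof -
  have "c \<alpha> = 0"
    if "finite S" and "\<And>\<beta>. c \<beta> \<noteq> 0 \<Longrightarrow> \<forall>i. i \<notin> S \<longrightarrow> \<beta> i = 0"
      and "power_series_on (\<lambda>_. 0) c"
    for S and c :: "('n \<Rightarrow> nat) \<Rightarrow> complex" and \<alpha>
    using that
  proof (induction S arbitrary: c \<alpha> rule: finite_induct)
    case empty
    have supp: "c \<beta> = 0" if "\<beta> \<noteq> (\<lambda>_. 0)" for \<beta>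
    proof (rule ccontr)
      assume "c \<beta> \<noteq> 0"
      then have "\<forall>i. \<beta> i = 0"
        using empty.prems(1) by simp
      then show False
        using that by (simp add: fun_eq_iff)
    qed
    have "((\<lambda>\<beta>. c \<beta> * mono_pow 0 \<beta>) has_sum c (\<lambda>_. 0)) UNIV"
      by (rule has_sum_finite_neutralI[where B="{\<lambda>_. 0}"]) (auto simp: supp)
    moreover have "((\<lambda>\<beta>. c \<beta> * mono_pow 0 \<beta>) has_sum 0) UNIV"
      using empty.prems(2) unfolding power_series_on_def by simp
    ultimately have "c (\<lambda>_. 0) = 0"
      using has_sum_unique by blast
    then show ?case
      using supp by (cases "\<alpha> = (\<lambda>_. 0)") auto
  next
    case (insert j S)
    define c' where "c' \<beta> = (if \<beta> j = 0 then c (\<beta>(j := \<alpha> j)) else 0)" for \<beta>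
    have "c' (\<alpha>(j := 0)) = 0"
    proof (rule insert.IH)
      show "power_series_on (\<lambda>_. 0) c'"
        unfolding c'_def by (rule power_series_on_zero_slice[OF insert.prems(2)])
      show "\<forall>i. i \<notin> S \<longrightarrow> \<beta> i = 0" if "c' \<beta> \<noteq> 0" for \<beta>
      proof (intro allI impI)
        fix i assume "i \<notin> S"
        have "\<beta> j = 0" and "c (\<beta>(j := \<alpha> j)) \<noteq> 0"
          using that by (auto simp: c'_def split: if_splits)
        then have "\<forall>i. i \<notin> insert j S \<longrightarrow> (\<beta>(j := \<alpha> j)) i = 0"
          using insert.prems(1) by blast
        then show "\<beta> i = 0"
          using \<open>i \<notin> S\<close> \<open>\<beta> j = 0\<close> by (cases "i = j") auto
      qed
    qed
    then show ?case
      by (simp add: c'_def)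
  qed
  from this[of UNIV] show ?thesis
    using assms by simp
qed

lemma power_series_on_unique:
  assumes "power_series_on f c" and "power_series_on f d"
  shows "c = d"
proof
  fix \<alpha>
  have "power_series_on (\<lambda>_. 0) (\<lambda>\<alpha>. c \<alpha> - d \<alpha>)"
    using power_series_on_diff[OF assms] by simp
  then show "c \<alpha> = d \<alpha>"
    using power_series_on_zero_coeffs by fastforce
qed

lemma h2_coeff_eqI: "power_series_on f c \<Longrightarrow> h2_coeff f = c"
  unfolding h2_coeff_def by (rule the_equality) (auto dest: power_series_on_unique)

section \<open>The reproducing kernel\<close>

lemma power_series_on_kernel_sum:
  "Z \<subseteq> polydisc \<Longrightarrow>
     power_series_on (\<lambda>z. \<Sum>w\<in>Z. d w * szego w z) (\<lambda>\<alpha>. \<Sum>w\<in>Z. d w * cnj (mono_pow w \<alpha>))"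
  by (intro power_series_on_sum power_series_on_cmult power_series_on_szego) auto

lemma has_sum_coeff_kernel_sum:
  assumes "Z \<subseteq> polydisc" and "power_series_on h c"
  shows "((\<lambda>\<alpha>. c \<alpha> * cnj (\<Sum>w\<in>Z. d w * cnj (mono_pow w \<alpha>)))
           has_sum (\<Sum>w\<in>Z. cnj (d w) * h w)) UNIV"
proof -
  have "((\<lambda>\<alpha>. \<Sum>w\<in>Z. cnj (d w) * (c \<alpha> * mono_pow w \<alpha>)) has_sum (\<Sum>w\<in>Z. cnj (d w) * h w)) UNIV"
    using assms by (intro has_sum_sum has_sum_cmult_right) (auto simp: power_series_on_def)
  then show ?thesis
    by (simp add: sum_distrib_left mult_ac)
qed

lemma h2_inner_kernel_sum:
  assumes "Z \<subseteq> polydisc" and "power_series_on h c"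
  shows "h2_inner h (\<lambda>z. \<Sum>w\<in>Z. d w * szego w z) = (\<Sum>w\<in>Z. cnj (d w) * h w)"
  unfolding h2_inner_def h2_coeff_eqI[OF power_series_on_kernel_sum[OF assms(1)]]
    h2_coeff_eqI[OF assms(2)]
  by (rule infsumI[OF has_sum_coeff_kernel_sum[OF assms]])

lemma sum_mono_pow_eq_0_mult_coord:
  assumes "\<And>\<alpha>. (\<Sum>v\<in>Z. e v * mono_pow v \<alpha>) = 0"
  shows "(\<Sum>v\<in>Z. (e v * (v $ i - a)) * mono_pow v \<alpha>) = 0"
proof -
  have "(\<Sum>v\<in>Z. (e v * (v $ i - a)) * mono_pow v \<alpha>)
      = (\<Sum>v\<in>Z. e v * mono_pow v (\<alpha>(i := Suc (\<alpha> i)))) - a * (\<Sum>v\<in>Z. e v * mono_pow v \<alpha>)"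
    by (simp add: mono_pow_Suc sum_distrib_left sum_subtractf[symmetric] algebra_simps)
  then show ?thesis
    using assms by simp
qed

text \<open>Multiply the relation by the polynomial prod_{u ~= w} (z_{i_u} - u_{i_u}), where the
  coordinate i_u separates u from w: it vanishes on Z - {w} but not at w.\<close>

lemma mono_pow_evaluations_independent:
  fixes Z :: "(complex ^ 'n::finite) set"
  assumes fin: "finite Z" and zero: "\<And>\<alpha>. (\<Sum>v\<in>Z. e v * mono_pow v \<alpha>) = 0" and w: "w \<in> Z"
  shows "e w = 0"
proof -
  have "\<exists>i. u $ i \<noteq> w $ i" if "u \<in> Z - {w}" for u
    using that by (auto simp: vec_eq_iff)
  then obtain ix where ix: "\<And>u. u \<in> Z - {w} \<Longrightarrow> u $ ix u \<noteq> w $ ix u"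
    by metis
  define p where "p W v = (\<Prod>u\<in>W. v $ ix u - u $ ix u)" for W v
  have "(\<Sum>v\<in>Z. (e v * p W v) * mono_pow v \<alpha>) = 0" if "finite W" for W \<alpha>
    using that
  proof (induction W arbitrary: \<alpha> rule: finite_induct)
    case (insert u W)
    then show ?case
      using sum_mono_pow_eq_0_mult_coord[where e="\<lambda>v. e v * p W v"] by (simp add: p_def mult_ac)
  qed (simp add: p_def zero)
  from this[of "Z - {w}" "\<lambda>_. 0"] have "(\<Sum>v\<in>Z. e v * p (Z - {w}) v) = 0"
    using fin by simp
  moreover have "p (Z - {w}) v = 0" if "v \<in> Z - {w}" for v
    unfolding p_def using fin that by (intro prod_zero) auto
  ultimately have "e w * p (Z - {w}) w = 0"
    using fin w by (simp add: sum.remove)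
  moreover have "p (Z - {w}) w \<noteq> 0"
  proof -
    have "w $ ix u - u $ ix u \<noteq> 0" if "u \<in> Z - {w}" for u
      using ix[OF that] by simp
    then show ?thesis
      unfolding p_def using fin by simp
  qed
  ultimately show ?thesis
    by simp
qed

text \<open>The Gram form sum_w cnj(e w) (sum_v e v S(w,v)) is the squared H^2 norm of
  sum_v e v S(.,v); if it vanishes, so do all Taylor coefficients sum_v e v cnj(v^alpha).\<close>

lemma szego_kernels_independent:
  fixes Z :: "(complex ^ 'n::finite) set"
  assumes fin: "finite Z" and Z: "Z \<subseteq> polydisc"
    and zero: "\<And>w. w \<in> Z \<Longrightarrow> (\<Sum>v\<in>Z. e v * szego v w) = 0" and w: "w \<in> Z"
  shows "e w = 0"
proof -
  define a where "a \<alpha> = (\<Sum>v\<in>Z. e v * cnj (mono_pow v \<alpha>))" for \<alpha>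
  have "((\<lambda>\<alpha>. a \<alpha> * cnj (a \<alpha>)) has_sum 0) UNIV"
    using has_sum_coeff_kernel_sum[OF Z power_series_on_kernel_sum[OF Z], of e] zero
    unfolding a_def by simp
  then have "a \<alpha> * cnj (a \<alpha>) = 0" for \<alpha>
    by (rule nonneg_has_sum_le_0D_complex) (auto simp: complex_mult_cnj less_eq_complex_def)
  then have "cnj (a \<alpha>) = 0" for \<alpha>
    by simp
  then have "(\<Sum>v\<in>Z. cnj (e v) * mono_pow v \<alpha>) = 0" for \<alpha>
    by (simp add: a_def)
  then have "cnj (e w) = 0"
    by (rule mono_pow_evaluations_independent[OF fin _ w])
  then show ?thesis
    by simp
qed

section \<open>The model space Q_Z\<close>

lemma kernel_sum_in_QZ: "(\<lambda>z. \<Sum>w\<in>Z. c w * szego w z) \<in> QZ Z"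
  unfolding QZ_def by blast

lemma QZ_zero: "(\<lambda>_. 0) \<in> QZ Z"
  using kernel_sum_in_QZ[where c="\<lambda>_. 0"] by simp

lemma QZ_add:
  assumes "f \<in> QZ Z" and "g \<in> QZ Z"
  shows "(\<lambda>z. f z + g z) \<in> QZ Z"
proof -
  obtain c d where "f = (\<lambda>z. \<Sum>w\<in>Z. c w * szego w z)" and "g = (\<lambda>z. \<Sum>w\<in>Z. d w * szego w z)"
    using assms unfolding QZ_def by blast
  then have "(\<lambda>z. f z + g z) = (\<lambda>z. \<Sum>w\<in>Z. (c w + d w) * szego w z)"
    by (simp add: sum.distrib distrib_right)
  then show ?thesis
    by (simp add: kernel_sum_in_QZ)
qed

lemma QZ_cmult:
  assumes "f \<in> QZ Z"
  shows "(\<lambda>z. a * f z) \<in> QZ Z"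
proof -
  obtain c where "f = (\<lambda>z. \<Sum>w\<in>Z. c w * szego w z)"
    using assms unfolding QZ_def by blast
  then have "(\<lambda>z. a * f z) = (\<lambda>z. \<Sum>w\<in>Z. (a * c w) * szego w z)"
    by (simp add: sum_distrib_left mult.assoc)
  then show ?thesis
    by (simp add: kernel_sum_in_QZ)
qed

lemma QZ_sum:
  "finite I \<Longrightarrow> (\<And>i. i \<in> I \<Longrightarrow> g i \<in> QZ Z) \<Longrightarrow> (\<lambda>z. \<Sum>i\<in>I. a i * g i z) \<in> QZ Z"
proof (induction I rule: finite_induct)
  case (insert j I)
  then show ?case
    using QZ_add[OF QZ_cmult[of "g j" Z "a j"]] by simp
qed (simp add: QZ_zero)

lemma QZ_mono:
  assumes "finite Z'" and "Z \<subseteq> Z'"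
  shows "QZ Z \<subseteq> QZ Z'"
proof
  fix f assume "f \<in> QZ Z"
  then obtain c where f: "f = (\<lambda>z. \<Sum>w\<in>Z. c w * szego w z)"
    unfolding QZ_def by blast
  have "(\<Sum>w\<in>Z. c w * szego w z) = (\<Sum>w\<in>Z'. (if w \<in> Z then c w else 0) * szego w z)" for z
  proof -
    have "(\<Sum>w\<in>Z. c w * szego w z) = (\<Sum>w\<in>Z' \<inter> Z. c w * szego w z)"
      using assms(2) by (simp add: Int_absorb1)
    also have "\<dots> = (\<Sum>w\<in>Z'. (if w \<in> Z then c w else 0) * szego w z)"
      using assms(1) by (auto simp: sum.inter_restrict intro!: sum.cong)
    finally show ?thesis .
  qed
  then show "f \<in> QZ Z'"
    unfolding f by (simp add: kernel_sum_in_QZ)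
qed

lemma holo_polydisc_QZ:
  assumes "Z \<subseteq> polydisc" and "f \<in> QZ Z"
  shows "holo_polydisc f"
proof -
  obtain c where "f = (\<lambda>z. \<Sum>w\<in>Z. c w * szego w z)"
    using assms(2) unfolding QZ_def by blast
  then show ?thesis
    using power_series_on_kernel_sum[OF assms(1)] unfolding holo_polydisc_def by blast
qed

lemma QZ_eqI:
  assumes fin: "finite Z" and Z: "Z \<subseteq> polydisc"
    and "f \<in> QZ Z" and "g \<in> QZ Z" and eq: "\<And>w. w \<in> Z \<Longrightarrow> f w = g w"
  shows "f = g"
proof -
  obtain c d where f: "f = (\<lambda>z. \<Sum>w\<in>Z. c w * szego w z)" and g: "g = (\<lambda>z. \<Sum>w\<in>Z. d w * szego w z)"
    using assms(3,4) unfolding QZ_def by blast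
  have diff: "f z - g z = (\<Sum>w\<in>Z. (c w - d w) * szego w z)" for z
    by (simp add: f g sum_subtractf left_diff_distrib)
  have "(\<Sum>v\<in>Z. (c v - d v) * szego v w) = 0" if "w \<in> Z" for w
    using diff[of w, symmetric] eq[OF that] by simp
  then have "c w - d w = 0" if "w \<in> Z" for w
    by (rule szego_kernels_independent[OF fin Z _ that])
  then have "f z = g z" for z
    using diff[of z] by simp
  then show ?thesis
    by (rule ext)
qed

lemma QZ_interpolation:
  assumes "finite Z" and "Z \<subseteq> polydisc"
  shows "\<exists>g\<in>QZ Z. \<forall>w\<in>Z. g w = y w"
  using assms
proof (induction Z arbitrary: y rule: finite_induct)
  case empty
  then show ?case
    using QZ_zero by blast
next
  case (insert w0 Z)
  then have Z: "Z \<subseteq> polydisc"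
    by simp
  obtain k where k: "k \<in> QZ Z" "\<forall>w\<in>Z. k w = szego w0 w"
    using insert.IH[OF Z] by blast
  obtain c where c: "k = (\<lambda>z. \<Sum>w\<in>Z. c w * szego w z)"
    using k(1) unfolding QZ_def by blast
  define e where "e w = (if w = w0 then 1 else - c w)" for w
  define h where "h z = (\<Sum>w\<in>insert w0 Z. e w * szego w z)" for z
  have h_QZ: "h \<in> QZ (insert w0 Z)"
    unfolding h_def[abs_def] by (rule kernel_sum_in_QZ)
  have "(\<Sum>w\<in>Z. e w * szego w z) = (\<Sum>w\<in>Z. - (c w * szego w z))" for z
    using insert.hyps(2) by (intro sum.cong) (auto simp: e_def)
  then have h_eq: "h z = szego w0 z - k z" for z
    using insert.hyps by (simp add: h_def e_def c sum_negf)
  have h_Z: "h w = 0" if "w \<in> Z" for w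
    using k(2) that by (simp add: h_eq)
  have h_w0: "h w0 \<noteq> 0"
  proof
    assume "h w0 = 0"
    then have vanish: "(\<Sum>v\<in>insert w0 Z. e v * szego v w) = 0" if "w \<in> insert w0 Z" for w
      using h_Z that unfolding h_def by auto
    have "e w0 = 0"
      using insert.hyps(1) insert.prems by (intro szego_kernels_independent[OF _ _ vanish]) auto
    then show False
      by (simp add: e_def)
  qed
  obtain g where g: "g \<in> QZ Z" "\<forall>w\<in>Z. g w = y w"
    using insert.IH[OF Z] by blast
  define g' where "g' z = g z + ((y w0 - g w0) / h w0) * h z" for z
  have "g \<in> QZ (insert w0 Z)"
    using g(1) QZ_mono[of "insert w0 Z" Z] insert.hyps(1) by blast
  from QZ_add[OF this QZ_cmult[OF h_QZ]] have "g' \<in> QZ (insert w0 Z)"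
    unfolding g'_def[abs_def] .
  moreover have "\<forall>w\<in>insert w0 Z. g' w = y w"
    using g(2) h_Z h_w0 by (auto simp: g'_def)
  ultimately show ?case
    by blast
qed

lemma projQ_eqI:
  assumes fin: "finite Z" and Z: "Z \<subseteq> polydisc" and f: "holo_polydisc f"
    and g: "g \<in> QZ Z" and eq: "\<And>w. w \<in> Z \<Longrightarrow> g w = f w"
  shows "projQ Z f = g"
proof -
  have orth_iff: "(\<forall>q\<in>QZ Z. h2_inner (\<lambda>z. f z - g' z) q = 0) \<longleftrightarrow> (\<forall>w\<in>Z. g' w = f w)"
    if g': "g' \<in> QZ Z" for g'
  proof -
    obtain a c where "power_series_on f a" and "power_series_on g' c"
      using f holo_polydisc_QZ[OF Z g'] unfolding holo_polydisc_def by blast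
    from power_series_on_diff[OF this]
    have inner: "h2_inner (\<lambda>z. f z - g' z) (\<lambda>z. \<Sum>w\<in>Z. d w * szego w z)
                   = (\<Sum>w\<in>Z. cnj (d w) * (f w - g' w))" for d
      by (rule h2_inner_kernel_sum[OF Z])
    show ?thesis
    proof
      assume orth: "\<forall>q\<in>QZ Z. h2_inner (\<lambda>z. f z - g' z) q = 0"
      show "\<forall>w\<in>Z. g' w = f w"
      proof
        fix w assume "w \<in> Z"
        have "h2_inner (\<lambda>z. f z - g' z) (\<lambda>z. \<Sum>v\<in>Z. (if v = w then 1 else 0) * szego v z) = 0"
          using orth kernel_sum_in_QZ[where c="\<lambda>v. if v = w then 1 else 0" and Z=Z] by blast
        then have "(\<Sum>v\<in>Z. cnj (if v = w then 1 else 0) * (f v - g' v)) = 0"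
          unfolding inner .
        also have "(\<Sum>v\<in>Z. cnj (if v = w then 1 else 0) * (f v - g' v))
                     = (\<Sum>v\<in>Z. if v = w then f v - g' v else 0)"
          by (rule sum.cong) auto
        finally show "g' w = f w"
          using fin \<open>w \<in> Z\<close> by simp
      qed
    next
      assume agree: "\<forall>w\<in>Z. g' w = f w"
      show "\<forall>q\<in>QZ Z. h2_inner (\<lambda>z. f z - g' z) q = 0"
      proof
        fix q assume "q \<in> QZ Z"
        then obtain d where "q = (\<lambda>z. \<Sum>w\<in>Z. d w * szego w z)"
          unfolding QZ_def by blast
        then show "h2_inner (\<lambda>z. f z - g' z) q = 0"
          using agree by (simp add: inner)
      qed
    qed
  qed
  show ?thesis
    unfolding projQ_def
  proof (rule the_equality)
    show "g \<in> QZ Z \<and> (\<forall>q\<in>QZ Z. h2_inner (\<lambda>z. f z - g z) q = 0)"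
      using g eq orth_iff[OF g] by simp
  next
    fix g' assume "g' \<in> QZ Z \<and> (\<forall>q\<in>QZ Z. h2_inner (\<lambda>z. f z - g' z) q = 0)"
    then show "g' = g"
      using orth_iff eq by (intro QZ_eqI[OF fin Z _ g]) auto
  qed
qed

lemma projQ_interpolates:
  assumes "finite Z" and "Z \<subseteq> polydisc" and "holo_polydisc f"
  shows "projQ Z f \<in> QZ Z" and "\<And>w. w \<in> Z \<Longrightarrow> projQ Z f w = f w"
proof -
  obtain g where "g \<in> QZ Z" "\<forall>w\<in>Z. g w = f w"
    using QZ_interpolation[OF assms(1,2)] by blast
  moreover from this have "projQ Z f = g"
    using assms by (intro projQ_eqI) auto
  ultimately show "projQ Z f \<in> QZ Z" and "\<And>w. w \<in> Z \<Longrightarrow> projQ Z f w = f w"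
    by auto
qed

lemma compr_in_QZ:
  assumes "finite Z" and Z: "Z \<subseteq> polydisc" and "holo_polydisc \<phi>" and f: "f \<in> QZ Z"
  shows "compr Z \<phi> f \<in> QZ Z"
  unfolding compr_def
  using assms holo_polydisc_QZ[OF Z f] by (intro projQ_interpolates holo_polydisc_mult)

lemma compr_eq_iff:
  assumes fin: "finite Z" and Z: "Z \<subseteq> polydisc" and \<phi>: "holo_polydisc \<phi>"
    and f: "f \<in> QZ Z" and g: "g \<in> QZ Z"
  shows "compr Z \<phi> f = g \<longleftrightarrow> (\<forall>w\<in>Z. g w = \<phi> w * f w)"
proof -
  have \<phi>f: "holo_polydisc (\<lambda>z. \<phi> z * f z)"
    using \<phi> holo_polydisc_QZ[OF Z f] by (rule holo_polydisc_mult)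
  show ?thesis
    using projQ_interpolates(2)[OF fin Z \<phi>f] projQ_eqI[OF fin Z \<phi>f g]
    unfolding compr_def by auto
qed

lemma compr_apply:
  assumes "finite Z" and "Z \<subseteq> polydisc" and "holo_polydisc \<phi>" and "f \<in> QZ Z" and "w \<in> Z"
  shows "compr Z \<phi> f w = \<phi> w * f w"
  unfolding compr_def
  using assms holo_polydisc_QZ[of Z f] by (intro projQ_interpolates(2) holo_polydisc_mult)

lemma compr_commute:
  assumes fin: "finite Z" and Z: "Z \<subseteq> polydisc"
    and \<phi>: "holo_polydisc \<phi>" and \<psi>: "holo_polydisc \<psi>" and f: "f \<in> QZ Z"
  shows "compr Z \<phi> (compr Z \<psi> f) = compr Z \<psi> (compr Z \<phi> f)"
proof -
  have \<psi>f: "compr Z \<psi> f \<in> QZ Z" and \<phi>f: "compr Z \<phi> f \<in> QZ Z"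
    using compr_in_QZ[OF fin Z] \<phi> \<psi> f by auto
  show ?thesis
    using compr_in_QZ[OF fin Z \<psi> \<phi>f] compr_apply[OF fin Z] \<phi> \<psi> f \<phi>f \<psi>f
    by (subst compr_eq_iff[OF fin Z \<phi> \<psi>f]) auto
qed

lemma szego_norm_le:
  assumes w: "w \<in> polydisc" and z: "z \<in> polydisc"
  shows "norm (szego w z) \<le> (\<Prod>i\<in>UNIV. 1 / (1 - norm (w $ i)))"
  unfolding szego_def prod_norm[symmetric]
proof (rule prod_mono, rule conjI)
  fix i
  have wi: "norm (w $ i) < 1" and zi: "norm (z $ i) < 1"
    using w z by (auto simp: polydisc_def)
  have "norm (z $ i * cnj (w $ i)) \<le> norm (w $ i)"
    using zi by (simp add: norm_mult mult_left_le_one_le)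
  then have le: "1 - norm (w $ i) \<le> norm (1 - z $ i * cnj (w $ i))"
    using norm_triangle_ineq2[of 1 "z $ i * cnj (w $ i)"] by simp
  with wi show "norm (inverse (1 - z $ i * cnj (w $ i))) \<le> 1 / (1 - norm (w $ i))"
    by (simp add: norm_inverse divide_inverse le_imp_inverse_le)
qed simp

lemma QZ_subset_hinf:
  assumes Z: "Z \<subseteq> polydisc"
  shows "QZ Z \<subseteq> hinf"
proof
  fix f assume f: "f \<in> QZ Z"
  then obtain c where fc: "f = (\<lambda>z. \<Sum>w\<in>Z. c w * szego w z)"
    unfolding QZ_def by blast
  have "norm (f z) \<le> (\<Sum>w\<in>Z. norm (c w) * (\<Prod>i\<in>UNIV. 1 / (1 - norm (w $ i))))"
    if z: "z \<in> polydisc" for z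
  proof -
    have "norm (f z) \<le> (\<Sum>w\<in>Z. norm (c w * szego w z))"
      unfolding fc by (rule norm_sum)
    also have "\<dots> \<le> (\<Sum>w\<in>Z. norm (c w) * (\<Prod>i\<in>UNIV. 1 / (1 - norm (w $ i))))"
      using Z z szego_norm_le by (auto simp: norm_mult intro!: sum_mono mult_left_mono)
    finally show ?thesis .
  qed
  then have "bounded (f ` polydisc)"
    unfolding bounded_iff by blast
  then show "f \<in> hinf"
    using holo_polydisc_QZ[OF Z f] by (simp add: hinf_def)
qed

section \<open>Operators commuting with the compressed coordinate shifts\<close>

lemma bounded_op_on_closed: "bounded_op_on Q X \<Longrightarrow> f \<in> Q \<Longrightarrow> X f \<in> Q"
  unfolding bounded_op_on_def by blast

lemma bounded_op_on_add:
  "bounded_op_on Q X \<Longrightarrow> f \<in> Q \<Longrightarrow> g \<in> Q \<Longrightarrow> X (\<lambda>z. f z + g z) = (\<lambda>z. X f z + X g z)"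
  unfolding bounded_op_on_def by blast

lemma bounded_op_on_cmult:
  "bounded_op_on Q X \<Longrightarrow> f \<in> Q \<Longrightarrow> X (\<lambda>z. a * f z) = (\<lambda>z. a * X f z)"
  unfolding bounded_op_on_def by blast

lemma bounded_op_on_QZ_sum:
  assumes X: "bounded_op_on (QZ Z) X" and "finite I" and "\<And>i. i \<in> I \<Longrightarrow> g i \<in> QZ Z"
  shows "X (\<lambda>z. \<Sum>i\<in>I. a i * g i z) = (\<lambda>z. \<Sum>i\<in>I. a i * X (g i) z)"
  using assms(2,3)
proof (induction I rule: finite_induct)
  case empty
  show ?case
    using bounded_op_on_cmult[OF X QZ_zero, of 0] by simp
next
  case (insert j I)
  have "g j \<in> QZ Z" and "(\<lambda>z. \<Sum>i\<in>I. a i * g i z) \<in> QZ Z"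
    using insert by (auto intro: QZ_sum)
  then show ?case
    using insert bounded_op_on_add[OF X QZ_cmult] bounded_op_on_cmult[OF X] by simp
qed

lemma compr_op_commutes_coord:
  assumes fin: "finite Z" and Z: "Z \<subseteq> polydisc" and \<phi>: "holo_polydisc \<phi>"
    and X: "\<And>f. f \<in> QZ Z \<Longrightarrow> X f = compr Z \<phi> f" and f: "f \<in> QZ Z"
  shows "X (compr Z (\<lambda>z. z $ i) f) = compr Z (\<lambda>z. z $ i) (X f)"
  using X[OF compr_in_QZ[OF fin Z holo_polydisc_coord f]] X[OF f]
    compr_commute[OF fin Z \<phi> holo_polydisc_coord f] by simp

text \<open>With E v the Lagrange basis of Q_Z, S_{z_i} (E v) = v_i E v; hence X (E v) is again a
  joint eigenvector for the eigenvalues v_i, and so vanishes at every w ~= v of Z.\<close>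

lemma commuting_op_vanishing:
  assumes fin: "finite Z" and Z: "Z \<subseteq> polydisc" and X: "bounded_op_on (QZ Z) X"
    and comm: "\<And>i f. f \<in> QZ Z \<Longrightarrow> X (compr Z (\<lambda>z. z $ i) f) = compr Z (\<lambda>z. z $ i) (X f)"
    and g: "g \<in> QZ Z" and w: "w \<in> Z" and "g w = 0"
  shows "X g w = 0"
proof -
  have "\<forall>v. \<exists>h\<in>QZ Z. \<forall>u\<in>Z. h u = (if u = v then 1 else 0)"
    by (intro allI QZ_interpolation[OF fin Z])
  then obtain E where E_QZ: "\<And>v. E v \<in> QZ Z"
    and E_delta: "\<And>v u. u \<in> Z \<Longrightarrow> E v u = (if u = v then 1 else 0)"
    by metis
  have eigen: "compr Z (\<lambda>z. z $ i) (E v) = (\<lambda>z. v $ i * E v z)" for i v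
    using compr_eq_iff[OF fin Z holo_polydisc_coord E_QZ QZ_cmult[OF E_QZ]] E_delta by simp
  have X_E: "X (E v) w = 0" if "v \<noteq> w" for v
  proof -
    obtain i where i: "v $ i \<noteq> w $ i"
      using \<open>v \<noteq> w\<close> by (auto simp: vec_eq_iff)
    have "v $ i * X (E v) w = X (compr Z (\<lambda>z. z $ i) (E v)) w"
      using bounded_op_on_cmult[OF X E_QZ] by (simp add: eigen)
    also have "\<dots> = compr Z (\<lambda>z. z $ i) (X (E v)) w"
      by (simp add: comm[OF E_QZ])
    also have "\<dots> = w $ i * X (E v) w"
      by (rule compr_apply[OF fin Z holo_polydisc_coord bounded_op_on_closed[OF X E_QZ] w])
    finally show ?thesis
      using i by simp
  qed
  have g_eq: "g = (\<lambda>z. \<Sum>v\<in>Z. g v * E v z)"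
  proof (rule QZ_eqI[OF fin Z g QZ_sum[OF fin E_QZ]])
    fix u assume "u \<in> Z"
    then have "(\<Sum>v\<in>Z. g v * E v u) = (\<Sum>v\<in>Z. if v = u then g v else 0)"
      by (intro sum.cong) (auto simp: E_delta)
    then show "g u = (\<Sum>v\<in>Z. g v * E v u)"
      using fin \<open>u \<in> Z\<close> by simp
  qed
  have "X g w = X (\<lambda>z. \<Sum>v\<in>Z. g v * E v z) w"
    using g_eq by (rule arg_cong[where f="\<lambda>h. X h w"])
  also have "\<dots> = (\<Sum>v\<in>Z. g v * X (E v) w)"
    by (simp add: bounded_op_on_QZ_sum[OF X fin E_QZ])
  also have "\<dots> = 0"
  proof (rule sum.neutral, rule ballI)
    fix v assume "v \<in> Z"
    show "g v * X (E v) w = 0"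
      using X_E \<open>g w = 0\<close> by (cases "v = w") auto
  qed
  finally show ?thesis .
qed

lemma commuting_op_eq_compr:
  assumes fin: "finite Z" and Z: "Z \<subseteq> polydisc" and X: "bounded_op_on (QZ Z) X"
    and comm: "\<And>i f. f \<in> QZ Z \<Longrightarrow> X (compr Z (\<lambda>z. z $ i) f) = compr Z (\<lambda>z. z $ i) (X f)"
    and f: "f \<in> QZ Z"
  shows "X f = compr Z (X (projQ Z (\<lambda>_. 1))) f"
proof -
  define P1 where "P1 = projQ Z (\<lambda>_. 1)"
  have P1_QZ: "P1 \<in> QZ Z" and P1_one: "\<And>w. w \<in> Z \<Longrightarrow> P1 w = 1"
    using projQ_interpolates[OF fin Z holo_polydisc_const] unfolding P1_def by auto
  have XP1_QZ: "X P1 \<in> QZ Z"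
    by (rule bounded_op_on_closed[OF X P1_QZ])
  have "X f w = X P1 w * f w" if w: "w \<in> Z" for w
  proof -
    define a where "a = - f w"
    define g where "g z = f z + a * P1 z" for z
    have g_QZ: "g \<in> QZ Z"
      unfolding g_def[abs_def] by (rule QZ_add[OF f QZ_cmult[OF P1_QZ]])
    have "g w = 0"
      using P1_one[OF w] by (simp add: g_def a_def)
    then have "X g w = 0"
      using commuting_op_vanishing[OF fin Z X comm g_QZ w] by simp
    moreover have "X g = (\<lambda>z. X f z + a * X P1 z)"
      unfolding g_def[abs_def]
      using bounded_op_on_add[OF X f QZ_cmult[OF P1_QZ]] bounded_op_on_cmult[OF X P1_QZ] by simp
    ultimately show ?thesis
      by (simp add: a_def mult.commute)
  qed
  then show ?thesis
    using compr_eq_iff[OF fin Z holo_polydisc_QZ[OF Z XP1_QZ] f bounded_op_on_closed[OF X f]]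
    unfolding P1_def by auto
qed

theorem corollary6p5:
  fixes Z :: "(complex ^ 'n::finite) set"
    and X :: "(complex ^ 'n \<Rightarrow> complex) \<Rightarrow> (complex ^ 'n \<Rightarrow> complex)"
  assumes "finite Z" and "Z \<subseteq> polydisc"
    and "bounded_op_on (QZ Z) X"
  shows "((\<forall>i. \<forall>f\<in>QZ Z. X (compr Z (\<lambda>z. z $ i) f) = compr Z (\<lambda>z. z $ i) (X f))
           \<longleftrightarrow> (\<exists>\<phi>\<in>hinf. \<forall>f\<in>QZ Z. X f = compr Z \<phi> f))
       \<and> ((\<forall>i. \<forall>f\<in>QZ Z. X (compr Z (\<lambda>z. z $ i) f) = compr Z (\<lambda>z. z $ i) (X f))
           \<longrightarrow> (let \<phi> = X (projQ Z (\<lambda>_. 1)) in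
                 \<phi> \<in> hinf \<and> \<phi> \<in> QZ Z \<and> (\<forall>f\<in>QZ Z. X f = compr Z \<phi> f)))"
proof -
  note fin = assms(1) and Z = assms(2) and X = assms(3)
  define \<phi> where "\<phi> = X (projQ Z (\<lambda>_. 1))"
  have \<phi>_QZ: "\<phi> \<in> QZ Z"
    unfolding \<phi>_def
    using bounded_op_on_closed[OF X projQ_interpolates(1)[OF fin Z holo_polydisc_const]] .
  have "\<forall>f\<in>QZ Z. X f = compr Z \<phi> f"
    if "\<forall>i. \<forall>f\<in>QZ Z. X (compr Z (\<lambda>z. z $ i) f) = compr Z (\<lambda>z. z $ i) (X f)"
    using commuting_op_eq_compr[OF fin Z X] that unfolding \<phi>_def by blast
  moreover have "\<forall>i. \<forall>f\<in>QZ Z. X (compr Z (\<lambda>z. z $ i) f) = compr Z (\<lambda>z. z $ i) (X f)"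
    if "\<psi> \<in> hinf" and "\<forall>f\<in>QZ Z. X f = compr Z \<psi> f" for \<psi>
    using compr_op_commutes_coord[OF fin Z] that by (simp add: hinf_def)
  moreover have "\<phi> \<in> hinf"
    using \<phi>_QZ QZ_subset_hinf[OF Z] by blast
  ultimately show ?thesis
    using \<phi>_QZ unfolding \<phi>_def Let_def by blast
qed

end
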